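(* Let $H$ be a finite group and $G$ a finitely generated group with finite generating set $S_G$; give $H\wr G$ the word length with respect to $(H\setminus\{1\})\cup S_G$, and let $K$ be the kernel of the projection $H\wr G\to G$. Let $r>1$. Then any element of $K$ of length less than $r$ is a product of bulbs indexed by elements of $G$ of length less than $r$.
   Context: Wreath product: $H\wr G$ is the set of pairs $(f,g)$, $f:G\to H$ finitely supported, with $(f_1,g_1)(f_2,g_2)=(f_1\cdot(g_1f_2),g_1g_2)$ where $(gf)(\gamma)=f(g^{-1}\gamma)$; $g\in G$ is identified with $(1,g)$ and $a\in H$ with $(f_a,1)$, $f_a(1)=a$, $f_a(\gamma)=1$ otherwise; the projection is $(f,g)\mapsto g$. For $g\in G$, $a\in H\setminus\{1\}$, $gag^{-1}$ is the $(g,a)$-bulb, a bulb indexed by $g$. Lengths are word lengths with respect to the given generating sets ($S_G$ for elements of $G$). *)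

theory Defs
  imports "HOL-Algebra.Algebra"
begin

text \<open>Wreath product H wr G: pairs (f,g) with g in G and f : G -> H finitely supported
  (f is set to the identity of H outside the carrier of G), with
  (f1,g1)(f2,g2) = (f1 * (g1 f2), g1 g2), where (g f)(gamma) = f(g^-1 gamma).\<close>

definition wreath :: "('h,'c) monoid_scheme \<Rightarrow> ('g,'d) monoid_scheme \<Rightarrow> (('g \<Rightarrow> 'h) \<times> 'g) monoid" where
  "wreath H G =
    \<lparr> carrier = {(f, g). g \<in> carrier G \<and> f \<in> carrier G \<rightarrow> carrier H
                       \<and> (\<forall>\<gamma>. \<gamma> \<notin> carrier G \<longrightarrow> f \<gamma> = \<one>\<^bsub>H\<^esub>)
                       \<and> finite {\<gamma> \<in> carrier G. f \<gamma> \<noteq> \<one>\<^bsub>H\<^esub>}},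
      monoid.mult = (\<lambda>(f1, g1) (f2, g2).
                ((\<lambda>\<gamma>. if \<gamma> \<in> carrier G then f1 \<gamma> \<otimes>\<^bsub>H\<^esub> f2 (inv\<^bsub>G\<^esub> g1 \<otimes>\<^bsub>G\<^esub> \<gamma>) else \<one>\<^bsub>H\<^esub>),
                 g1 \<otimes>\<^bsub>G\<^esub> g2)),
      one = ((\<lambda>\<gamma>. \<one>\<^bsub>H\<^esub>), \<one>\<^bsub>G\<^esub>) \<rparr>"

definition wr_of_G :: "('h,'c) monoid_scheme \<Rightarrow> ('g,'d) monoid_scheme \<Rightarrow> 'g \<Rightarrow> ('g \<Rightarrow> 'h) \<times> 'g" where
  "wr_of_G H G g = ((\<lambda>\<gamma>. \<one>\<^bsub>H\<^esub>), g)"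

definition wr_of_H :: "('h,'c) monoid_scheme \<Rightarrow> ('g,'d) monoid_scheme \<Rightarrow> 'h \<Rightarrow> ('g \<Rightarrow> 'h) \<times> 'g" where
  "wr_of_H H G a = ((\<lambda>\<gamma>. if \<gamma> = \<one>\<^bsub>G\<^esub> then a else \<one>\<^bsub>H\<^esub>), \<one>\<^bsub>G\<^esub>)"

definition bulb :: "('h,'c) monoid_scheme \<Rightarrow> ('g,'d) monoid_scheme \<Rightarrow> 'g \<Rightarrow> 'h \<Rightarrow> ('g \<Rightarrow> 'h) \<times> 'g" where
  "bulb H G g a = wr_of_G H G g \<otimes>\<^bsub>wreath H G\<^esub> wr_of_H H G a
                  \<otimes>\<^bsub>wreath H G\<^esub> inv\<^bsub>wreath H G\<^esub> (wr_of_G H G g)"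

definition wreath_gens :: "('h,'c) monoid_scheme \<Rightarrow> ('g,'d) monoid_scheme \<Rightarrow> 'g set \<Rightarrow> (('g \<Rightarrow> 'h) \<times> 'g) set" where
  "wreath_gens H G S = wr_of_H H G ` (carrier H - {\<one>\<^bsub>H\<^esub>}) \<union> wr_of_G H G ` S"

definition word_length :: "('a,'b) monoid_scheme \<Rightarrow> 'a set \<Rightarrow> 'a \<Rightarrow> nat" where
  "word_length W S x = (LEAST n. \<exists>ws. length ws = n \<and> set ws \<subseteq> S \<union> m_inv W ` S
                                      \<and> foldr (\<otimes>\<^bsub>W\<^esub>) ws \<one>\<^bsub>W\<^esub> = x)"

end

theory Submission
  imports Defs
begin

(* Build the product w_1 ... w_n of a word in the generators and their inverses from the right,
   keeping it in the form b g with b a product of bulbs and g in G. A letter a of H prepends the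
   (1,a)-bulb; a letter s of G passes through b because s (h a h^-1) = (s h) a (s h)^-1 s, which
   turns each (h,a)-bulb into an (s h,a)-bulb. Hence every bulb index is a product of fewer than n
   letters of S_G and their inverses. For x in the kernel the trailing g is trivial, and taking a
   shortest word for x bounds the lengths of the indices by the length of x. *)

lemma (in monoid) foldr_mult_closed:
  "set ws \<subseteq> carrier G \<Longrightarrow> foldr (\<otimes>) ws \<one> \<in> carrier G"
  by (induction ws) auto

lemma (in monoid) foldr_mult_append:
  assumes "set us \<subseteq> carrier G" and "set vs \<subseteq> carrier G"
  shows "foldr (\<otimes>) (us @ vs) \<one> = foldr (\<otimes>) us \<one> \<otimes> foldr (\<otimes>) vs \<one>"
  using assms(1) by (induction us) (auto simp: m_assoc foldr_mult_closed[OF assms(2)])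

lemma (in group) generate_obtain_word:
  assumes "S \<subseteq> carrier G" and "x \<in> generate G S"
  obtains ws where "set ws \<subseteq> S \<union> m_inv G ` S" and "foldr (\<otimes>) ws \<one> = x"
proof -
  from assms(2) have "\<exists>ws. set ws \<subseteq> S \<union> m_inv G ` S \<and> foldr (\<otimes>) ws \<one> = x"
  proof (induction rule: generate.induct)
    case one
    show ?case by (rule exI[of _ "[]"]) simp
  next
    case (incl h)
    then show ?case using assms(1) by (intro exI[of _ "[h]"]) auto
  next
    case (inv h)
    then show ?case using assms(1) by (intro exI[of _ "[inv h]"]) auto
  next
    case (eng h1 h2)
    then obtain us vs where "set us \<subseteq> S \<union> m_inv G ` S" "foldr (\<otimes>) us \<one> = h1"
      and "set vs \<subseteq> S \<union> m_inv G ` S" "foldr (\<otimes>) vs \<one> = h2" by blast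
    moreover have "S \<union> m_inv G ` S \<subseteq> carrier G" using assms(1) by auto
    ultimately show ?case
      using foldr_mult_append[of us vs] by (intro exI[of _ "us @ vs"]) (auto simp del: foldr_append)
  qed
  then show ?thesis using that by blast
qed

lemma word_length_le:
  assumes "set ws \<subseteq> S \<union> m_inv W ` S"
  shows "word_length W S (foldr (\<otimes>\<^bsub>W\<^esub>) ws \<one>\<^bsub>W\<^esub>) \<le> length ws"
  unfolding word_length_def by (rule Least_le) (use assms in blast)

lemma word_length_obtain_shortest_word:
  assumes "set ws \<subseteq> S \<union> m_inv W ` S" and "foldr (\<otimes>\<^bsub>W\<^esub>) ws \<one>\<^bsub>W\<^esub> = x"
  obtains vs where "length vs = word_length W S x" and "set vs \<subseteq> S \<union> m_inv W ` S"
    and "foldr (\<otimes>\<^bsub>W\<^esub>) vs \<one>\<^bsub>W\<^esub> = x"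
proof -
  let ?P = "\<lambda>n. \<exists>vs. length vs = n \<and> set vs \<subseteq> S \<union> m_inv W ` S \<and> foldr (\<otimes>\<^bsub>W\<^esub>) vs \<one>\<^bsub>W\<^esub> = x"
  have "?P (length ws)" using assms by blast
  then have "?P (Least ?P)" by (rule LeastI)
  then show ?thesis using that unfolding word_length_def by blast
qed

lemma (in group) word_length_letter_mult_le:
  assumes "S \<subseteq> carrier G" and "x \<in> generate G S" and "s \<in> S \<union> m_inv G ` S"
  shows "word_length G S (s \<otimes> x) \<le> Suc (word_length G S x)"
proof -
  obtain ws where "set ws \<subseteq> S \<union> m_inv G ` S" and "foldr (\<otimes>) ws \<one> = x"
    using generate_obtain_word[OF assms(1,2)] .
  then obtain vs where "length vs = word_length G S x" "set vs \<subseteq> S \<union> m_inv G ` S"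
      "foldr (\<otimes>) vs \<one> = x"
    by (rule word_length_obtain_shortest_word)
  then show ?thesis using word_length_le[of "s # vs" S G] assms(3) by simp
qed

locale wreath_product = H: group H + G: group G
  for H :: "('h,'c) monoid_scheme" and G :: "('g,'d) monoid_scheme"
begin

abbreviation W where "W \<equiv> wreath H G"

lemma wreath_mult:
  "(f1, g1) \<otimes>\<^bsub>W\<^esub> (f2, g2) =
   ((\<lambda>\<gamma>. if \<gamma> \<in> carrier G then f1 \<gamma> \<otimes>\<^bsub>H\<^esub> f2 (inv\<^bsub>G\<^esub> g1 \<otimes>\<^bsub>G\<^esub> \<gamma>) else \<one>\<^bsub>H\<^esub>), g1 \<otimes>\<^bsub>G\<^esub> g2)"
  by (simp add: wreath_def)

lemma wreath_one: "\<one>\<^bsub>W\<^esub> = ((\<lambda>\<gamma>. \<one>\<^bsub>H\<^esub>), \<one>\<^bsub>G\<^esub>)"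
  by (simp add: wreath_def)

lemma mem_wreath_carrier:
  "(f, g) \<in> carrier W \<longleftrightarrow> g \<in> carrier G \<and> f \<in> carrier G \<rightarrow> carrier H
     \<and> (\<forall>\<gamma>. \<gamma> \<notin> carrier G \<longrightarrow> f \<gamma> = \<one>\<^bsub>H\<^esub>) \<and> finite {\<gamma> \<in> carrier G. f \<gamma> \<noteq> \<one>\<^bsub>H\<^esub>}"
  by (simp add: wreath_def)

lemma snd_wreath_mult: "snd (x \<otimes>\<^bsub>W\<^esub> y) = snd x \<otimes>\<^bsub>G\<^esub> snd y"
  by (cases x, cases y) (simp add: wreath_mult)

lemma wreath_mult_closed:
  assumes "(f1, g1) \<in> carrier W" and "(f2, g2) \<in> carrier W"
  shows "(f1, g1) \<otimes>\<^bsub>W\<^esub> (f2, g2) \<in> carrier W"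
proof -
  have g1: "g1 \<in> carrier G" and f1: "f1 \<in> carrier G \<rightarrow> carrier H"
    and f2: "f2 \<in> carrier G \<rightarrow> carrier H"
    using assms by (simp_all add: mem_wreath_carrier)
  let ?f = "\<lambda>\<gamma>. if \<gamma> \<in> carrier G then f1 \<gamma> \<otimes>\<^bsub>H\<^esub> f2 (inv\<^bsub>G\<^esub> g1 \<otimes>\<^bsub>G\<^esub> \<gamma>) else \<one>\<^bsub>H\<^esub>"
  have "{\<gamma> \<in> carrier G. ?f \<gamma> \<noteq> \<one>\<^bsub>H\<^esub>}
      \<subseteq> {\<gamma> \<in> carrier G. f1 \<gamma> \<noteq> \<one>\<^bsub>H\<^esub>} \<union> (\<otimes>\<^bsub>G\<^esub>) g1 ` {\<gamma> \<in> carrier G. f2 \<gamma> \<noteq> \<one>\<^bsub>H\<^esub>}"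
  proof
    fix \<gamma> assume "\<gamma> \<in> {\<gamma> \<in> carrier G. ?f \<gamma> \<noteq> \<one>\<^bsub>H\<^esub>}"
    then have \<gamma>: "\<gamma> \<in> carrier G" and "?f \<gamma> \<noteq> \<one>\<^bsub>H\<^esub>" by auto
    have "\<gamma> = g1 \<otimes>\<^bsub>G\<^esub> (inv\<^bsub>G\<^esub> g1 \<otimes>\<^bsub>G\<^esub> \<gamma>)"
      using g1 \<gamma> by (simp add: G.m_assoc[symmetric])
    moreover have "f1 \<gamma> \<noteq> \<one>\<^bsub>H\<^esub> \<or> f2 (inv\<^bsub>G\<^esub> g1 \<otimes>\<^bsub>G\<^esub> \<gamma>) \<noteq> \<one>\<^bsub>H\<^esub>"
      using \<open>?f \<gamma> \<noteq> \<one>\<^bsub>H\<^esub>\<close> \<gamma> f2 g1 by auto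
    ultimately show "\<gamma> \<in> {\<gamma> \<in> carrier G. f1 \<gamma> \<noteq> \<one>\<^bsub>H\<^esub>}
        \<union> (\<otimes>\<^bsub>G\<^esub>) g1 ` {\<gamma> \<in> carrier G. f2 \<gamma> \<noteq> \<one>\<^bsub>H\<^esub>}"
      using \<gamma> g1 by blast
  qed
  then have "finite {\<gamma> \<in> carrier G. ?f \<gamma> \<noteq> \<one>\<^bsub>H\<^esub>}"
    by (rule finite_subset) (use assms in \<open>simp add: mem_wreath_carrier\<close>)
  moreover have "?f \<in> carrier G \<rightarrow> carrier H" using g1 f1 f2 by (auto simp: Pi_iff)
  ultimately show ?thesis using assms by (simp add: wreath_mult mem_wreath_carrier)
qed

lemma wreath_m_assoc:
  assumes "(f1, g1) \<in> carrier W" and "(f2, g2) \<in> carrier W" and "(f3, g3) \<in> carrier W"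
  shows "(f1, g1) \<otimes>\<^bsub>W\<^esub> (f2, g2) \<otimes>\<^bsub>W\<^esub> (f3, g3) = (f1, g1) \<otimes>\<^bsub>W\<^esub> ((f2, g2) \<otimes>\<^bsub>W\<^esub> (f3, g3))"
proof -
  have "g1 \<in> carrier G" "g2 \<in> carrier G" "g3 \<in> carrier G" and f1: "f1 \<in> carrier G \<rightarrow> carrier H"
    and f2: "f2 \<in> carrier G \<rightarrow> carrier H" and f3: "f3 \<in> carrier G \<rightarrow> carrier H"
    using assms by (simp_all add: mem_wreath_carrier)
  then show ?thesis
    by (auto simp: wreath_mult G.inv_mult_group G.m_assoc
        intro!: ext H.m_assoc funcset_mem[OF f1] funcset_mem[OF f2] funcset_mem[OF f3])
qed

lemma wreath_l_one: "x \<in> carrier W \<Longrightarrow> \<one>\<^bsub>W\<^esub> \<otimes>\<^bsub>W\<^esub> x = x"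
  by (cases x) (auto simp: wreath_one wreath_mult mem_wreath_carrier Pi_iff intro!: ext)

lemma wreath_l_inv:
  assumes x: "(f, g) \<in> carrier W"
  defines "y \<equiv> (\<lambda>\<gamma>. if \<gamma> \<in> carrier G then inv\<^bsub>H\<^esub> f (g \<otimes>\<^bsub>G\<^esub> \<gamma>) else \<one>\<^bsub>H\<^esub>, inv\<^bsub>G\<^esub> g)"
  shows "y \<in> carrier W" and "y \<otimes>\<^bsub>W\<^esub> (f, g) = \<one>\<^bsub>W\<^esub>"
proof -
  have g: "g \<in> carrier G" and f: "f \<in> carrier G \<rightarrow> carrier H"
    using x by (simp_all add: mem_wreath_carrier)
  have "{\<gamma> \<in> carrier G. fst y \<gamma> \<noteq> \<one>\<^bsub>H\<^esub>}
      \<subseteq> (\<otimes>\<^bsub>G\<^esub>) (inv\<^bsub>G\<^esub> g) ` {\<gamma> \<in> carrier G. f \<gamma> \<noteq> \<one>\<^bsub>H\<^esub>}"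
  proof clarify
    fix \<gamma> assume \<gamma>: "\<gamma> \<in> carrier G" and "fst y \<gamma> \<noteq> \<one>\<^bsub>H\<^esub>"
    then have "f (g \<otimes>\<^bsub>G\<^esub> \<gamma>) \<noteq> \<one>\<^bsub>H\<^esub>" by (auto simp: y_def)
    moreover have "\<gamma> = inv\<^bsub>G\<^esub> g \<otimes>\<^bsub>G\<^esub> (g \<otimes>\<^bsub>G\<^esub> \<gamma>)"
      using g \<gamma> by (simp add: G.m_assoc[symmetric])
    ultimately show "\<gamma> \<in> (\<otimes>\<^bsub>G\<^esub>) (inv\<^bsub>G\<^esub> g) ` {\<gamma> \<in> carrier G. f \<gamma> \<noteq> \<one>\<^bsub>H\<^esub>}"
      using g \<gamma> by blast
  qed
  then have "finite {\<gamma> \<in> carrier G. fst y \<gamma> \<noteq> \<one>\<^bsub>H\<^esub>}"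
    by (rule finite_subset) (use x in \<open>simp add: mem_wreath_carrier\<close>)
  then show "y \<in> carrier W" using g f by (auto simp: y_def mem_wreath_carrier Pi_iff)
  show "y \<otimes>\<^bsub>W\<^esub> (f, g) = \<one>\<^bsub>W\<^esub>"
    using g f by (auto simp: y_def wreath_one wreath_mult G.m_assoc[symmetric] Pi_iff intro!: ext)
qed

lemma wreath_is_group: "group W"
proof (rule groupI)
  show "x \<otimes>\<^bsub>W\<^esub> y \<in> carrier W" if "x \<in> carrier W" "y \<in> carrier W" for x y
    using that wreath_mult_closed by (cases x, cases y) simp
  show "x \<otimes>\<^bsub>W\<^esub> y \<otimes>\<^bsub>W\<^esub> z = x \<otimes>\<^bsub>W\<^esub> (y \<otimes>\<^bsub>W\<^esub> z)"
    if "x \<in> carrier W" "y \<in> carrier W" "z \<in> carrier W" for x y z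
    using that wreath_m_assoc by (cases x, cases y, cases z) simp
  show "\<exists>y\<in>carrier W. y \<otimes>\<^bsub>W\<^esub> x = \<one>\<^bsub>W\<^esub>" if "x \<in> carrier W" for x
    using that wreath_l_inv by (cases x) blast
  show "\<one>\<^bsub>W\<^esub> \<otimes>\<^bsub>W\<^esub> x = x" if "x \<in> carrier W" for x
    using that by (rule wreath_l_one)
qed (simp add: wreath_one mem_wreath_carrier)

sublocale W: group W
  by (rule wreath_is_group)

lemma wr_of_G_hom: "wr_of_G H G \<in> hom G W"
  by (rule homI) (auto simp: wr_of_G_def mem_wreath_carrier wreath_mult)

lemma wr_of_H_hom: "wr_of_H H G \<in> hom H W"
proof (rule homI)
  fix a assume "a \<in> carrier H"
  moreover have "{\<gamma> \<in> carrier G. (if \<gamma> = \<one>\<^bsub>G\<^esub> then a else \<one>\<^bsub>H\<^esub>) \<noteq> \<one>\<^bsub>H\<^esub>} \<subseteq> {\<one>\<^bsub>G\<^esub>}"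
    by auto
  ultimately show "wr_of_H H G a \<in> carrier W"
    by (auto simp: wr_of_H_def mem_wreath_carrier intro: finite_subset)
qed (auto simp: wr_of_H_def wreath_mult intro!: ext)

sublocale wr_of_G: group_hom G W "wr_of_G H G"
  by unfold_locales (rule wr_of_G_hom)

sublocale wr_of_H: group_hom H W "wr_of_H H G"
  by unfold_locales (rule wr_of_H_hom)

lemma bulb_eq:
  assumes h: "h \<in> carrier G" and a: "a \<in> carrier H"
  shows "bulb H G h a = ((\<lambda>\<delta>. if \<delta> = h then a else \<one>\<^bsub>H\<^esub>), \<one>\<^bsub>G\<^esub>)"
proof -
  have "inv\<^bsub>G\<^esub> h \<otimes>\<^bsub>G\<^esub> \<delta> = \<one>\<^bsub>G\<^esub> \<longleftrightarrow> \<delta> = h" if "\<delta> \<in> carrier G" for \<delta>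
    using G.inv_solve_left[of "\<one>\<^bsub>G\<^esub>" h \<delta>] h that by (auto simp: eq_commute[of "\<one>\<^bsub>G\<^esub>"])
  moreover have "bulb H G h a = wr_of_G H G h \<otimes>\<^bsub>W\<^esub> wr_of_H H G a \<otimes>\<^bsub>W\<^esub> wr_of_G H G (inv\<^bsub>G\<^esub> h)"
    using h by (simp add: bulb_def)
  ultimately show ?thesis
    using h a by (auto simp: wr_of_G_def wr_of_H_def wreath_mult intro!: ext)
qed

lemma wr_of_H_eq_bulb_one: "a \<in> carrier H \<Longrightarrow> wr_of_H H G a = bulb H G \<one>\<^bsub>G\<^esub> a"
  by (simp add: bulb_eq wr_of_H_def)

lemma bulb_closed: "h \<in> carrier G \<Longrightarrow> a \<in> carrier H \<Longrightarrow> bulb H G h a \<in> carrier W"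
  by (simp add: bulb_def)

lemma wr_of_G_mult_bulb:
  assumes s: "s \<in> carrier G" and h: "h \<in> carrier G" and a: "a \<in> carrier H"
  shows "wr_of_G H G s \<otimes>\<^bsub>W\<^esub> bulb H G h a = bulb H G (s \<otimes>\<^bsub>G\<^esub> h) a \<otimes>\<^bsub>W\<^esub> wr_of_G H G s"
  using assms by (simp add: bulb_def W.m_assoc W.inv_mult_group)

definition bulb_prod :: "('g \<times> 'h) list \<Rightarrow> ('g \<Rightarrow> 'h) \<times> 'g" where
  "bulb_prod bs = foldr (\<lambda>(g, a) y. bulb H G g a \<otimes>\<^bsub>W\<^esub> y) bs \<one>\<^bsub>W\<^esub>"

lemma bulb_prod_Nil [simp]: "bulb_prod [] = \<one>\<^bsub>W\<^esub>"
  and bulb_prod_Cons [simp]: "bulb_prod ((h, a) # bs) = bulb H G h a \<otimes>\<^bsub>W\<^esub> bulb_prod bs"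
  by (simp_all add: bulb_prod_def)

lemma bulb_prod_closed: "set bs \<subseteq> carrier G \<times> carrier H \<Longrightarrow> bulb_prod bs \<in> carrier W"
  by (induction bs) (auto simp: bulb_closed)

lemma snd_bulb_prod: "set bs \<subseteq> carrier G \<times> carrier H \<Longrightarrow> snd (bulb_prod bs) = \<one>\<^bsub>G\<^esub>"
  by (induction bs) (auto simp: snd_wreath_mult bulb_eq wreath_one)

lemma wr_of_G_mult_bulb_prod:
  assumes s: "s \<in> carrier G"
  shows "set bs \<subseteq> carrier G \<times> carrier H \<Longrightarrow>
    wr_of_G H G s \<otimes>\<^bsub>W\<^esub> bulb_prod bs
      = bulb_prod (map (\<lambda>(h, a). (s \<otimes>\<^bsub>G\<^esub> h, a)) bs) \<otimes>\<^bsub>W\<^esub> wr_of_G H G s"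
proof (induction bs)
  case (Cons b bs)
  obtain h a where b: "b = (h, a)" by fastforce
  with Cons.prems have h: "h \<in> carrier G" and a: "a \<in> carrier H"
    and bs: "set bs \<subseteq> carrier G \<times> carrier H" by auto
  have bs': "set (map (\<lambda>(h, a). (s \<otimes>\<^bsub>G\<^esub> h, a)) bs) \<subseteq> carrier G \<times> carrier H"
    using bs s by auto
  have "wr_of_G H G s \<otimes>\<^bsub>W\<^esub> bulb_prod (b # bs)
      = (wr_of_G H G s \<otimes>\<^bsub>W\<^esub> bulb H G h a) \<otimes>\<^bsub>W\<^esub> bulb_prod bs"
    using s h a bs by (simp add: b W.m_assoc bulb_closed bulb_prod_closed)
  also have "\<dots> = bulb H G (s \<otimes>\<^bsub>G\<^esub> h) a \<otimes>\<^bsub>W\<^esub> (wr_of_G H G s \<otimes>\<^bsub>W\<^esub> bulb_prod bs)"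
    using s h a bs by (simp add: wr_of_G_mult_bulb W.m_assoc bulb_closed bulb_prod_closed)
  also have "\<dots> = bulb_prod (map (\<lambda>(h, a). (s \<otimes>\<^bsub>G\<^esub> h, a)) (b # bs)) \<otimes>\<^bsub>W\<^esub> wr_of_G H G s"
    using s h a bs bs' Cons.IH by (simp add: b W.m_assoc bulb_closed bulb_prod_closed)
  finally show ?case .
qed (simp add: s)

lemma finite_support_eq_bulb_prod:
  assumes f: "f \<in> carrier G \<rightarrow> carrier H"
  shows "finite A \<Longrightarrow> A \<subseteq> carrier G \<Longrightarrow> \<exists>bs. set bs \<subseteq> carrier G \<times> carrier H
      \<and> bulb_prod bs = ((\<lambda>\<delta>. if \<delta> \<in> A then f \<delta> else \<one>\<^bsub>H\<^esub>), \<one>\<^bsub>G\<^esub>)"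
proof (induction A rule: finite_induct)
  case empty
  show ?case by (intro exI[of _ "[]"]) (simp add: wreath_one)
next
  case (insert \<gamma> A)
  then obtain bs where bs: "set bs \<subseteq> carrier G \<times> carrier H"
    and eq: "bulb_prod bs = ((\<lambda>\<delta>. if \<delta> \<in> A then f \<delta> else \<one>\<^bsub>H\<^esub>), \<one>\<^bsub>G\<^esub>)" by auto
  have \<gamma>: "\<gamma> \<in> carrier G" and A: "A \<subseteq> carrier G" using insert.prems by auto
  then have "bulb_prod ((\<gamma>, f \<gamma>) # bs) = ((\<lambda>\<delta>. if \<delta> \<in> insert \<gamma> A then f \<delta> else \<one>\<^bsub>H\<^esub>), \<one>\<^bsub>G\<^esub>)"
    using f insert.hyps(2)
    by (auto simp: eq bulb_eq wreath_mult Pi_iff subsetD intro!: ext)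
  then show ?case using bs \<gamma> f by (intro exI[of _ "(\<gamma>, f \<gamma>) # bs"]) auto
qed

lemma kernel_obtain_bulb_prod:
  assumes "x \<in> kernel W G snd"
  obtains bs where "set bs \<subseteq> carrier G \<times> carrier H" and "bulb_prod bs = x"
proof -
  obtain f where x: "x = (f, \<one>\<^bsub>G\<^esub>)" and f: "f \<in> carrier G \<rightarrow> carrier H"
    and "\<And>\<gamma>. \<gamma> \<notin> carrier G \<Longrightarrow> f \<gamma> = \<one>\<^bsub>H\<^esub>" and fin: "finite {\<gamma> \<in> carrier G. f \<gamma> \<noteq> \<one>\<^bsub>H\<^esub>}"
    using assms by (cases x) (auto simp: kernel_def mem_wreath_carrier)
  then have "f = (\<lambda>\<delta>. if \<delta> \<in> {\<gamma> \<in> carrier G. f \<gamma> \<noteq> \<one>\<^bsub>H\<^esub>} then f \<delta> else \<one>\<^bsub>H\<^esub>)"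
    by (auto intro!: ext)
  then show ?thesis
    using finite_support_eq_bulb_prod[OF f fin] that x by auto
qed

lemma wreath_gens_closed: "S \<subseteq> carrier G \<Longrightarrow> wreath_gens H G S \<subseteq> carrier W"
  by (auto simp: wreath_gens_def)

lemma kernel_subset_generate:
  assumes S: "S \<subseteq> carrier G" and gen: "generate G S = carrier G"
  shows "kernel W G snd \<subseteq> generate W (wreath_gens H G S)"
proof
  let ?U = "generate W (wreath_gens H G S)"
  have U: "subgroup ?U W" by (rule W.generate_is_subgroup[OF wreath_gens_closed[OF S]])
  have G_in: "wr_of_G H G g \<in> ?U" if "g \<in> carrier G" for g
  proof -
    have "wr_of_G H G ` carrier G = generate W (wr_of_G H G ` S)"
      using wr_of_G.generate_img[OF S] gen by simp
    also have "\<dots> \<subseteq> ?U" by (rule W.mono_generate) (auto simp: wreath_gens_def)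
    finally show ?thesis using that by blast
  qed
  have H_in: "wr_of_H H G a \<in> ?U" if "a \<in> carrier H" for a
  proof (cases "a = \<one>\<^bsub>H\<^esub>")
    case True
    then show ?thesis using generate.one[of W] by simp
  next
    case False
    then show ?thesis using that by (auto simp: wreath_gens_def intro: generate.incl)
  qed
  have "bulb_prod bs \<in> ?U" if "set bs \<subseteq> carrier G \<times> carrier H" for bs
    using that by (induction bs) (auto simp: bulb_def G_in H_in subgroup.m_closed[OF U]
        subgroup.m_inv_closed[OF U] subgroup.one_closed[OF U])
  then show "x \<in> ?U" if "x \<in> kernel W G snd" for x
    using that by (auto elim: kernel_obtain_bulb_prod)
qed

lemma wreath_letter_cases:
  assumes "S \<subseteq> carrier G" and "w \<in> wreath_gens H G S \<union> m_inv W ` wreath_gens H G S"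
  obtains (H) a where "a \<in> carrier H - {\<one>\<^bsub>H\<^esub>}" and "w = wr_of_H H G a"
    | (G) s where "s \<in> S \<union> m_inv G ` S" and "w = wr_of_G H G s"
proof -
  have "inv\<^bsub>W\<^esub> (wr_of_H H G a) = wr_of_H H G (inv\<^bsub>H\<^esub> a) \<and> inv\<^bsub>H\<^esub> a \<in> carrier H - {\<one>\<^bsub>H\<^esub>}"
    if "a \<in> carrier H - {\<one>\<^bsub>H\<^esub>}" for a
    using that by simp
  moreover have "inv\<^bsub>W\<^esub> (wr_of_G H G s) = wr_of_G H G (inv\<^bsub>G\<^esub> s)" if "s \<in> S" for s
    using that assms(1) by auto
  ultimately show ?thesis
    using assms(2) that unfolding wreath_gens_def by blast
qed

lemma word_eq_bulb_prod_mult: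
  assumes S: "S \<subseteq> carrier G" and gen: "generate G S = carrier G"
  shows "set ws \<subseteq> wreath_gens H G S \<union> m_inv W ` wreath_gens H G S \<Longrightarrow>
    \<exists>bs g. g \<in> carrier G \<and> foldr (\<otimes>\<^bsub>W\<^esub>) ws \<one>\<^bsub>W\<^esub> = bulb_prod bs \<otimes>\<^bsub>W\<^esub> wr_of_G H G g
      \<and> set bs \<subseteq> {(h, a). h \<in> carrier G \<and> a \<in> carrier H - {\<one>\<^bsub>H\<^esub>} \<and> word_length G S h < length ws}"
proof (induction ws)
  case Nil
  show ?case by (intro exI[of _ "[]"] exI[of _ "\<one>\<^bsub>G\<^esub>"]) simp
next
  case (Cons w ws)
  then obtain bs g where g: "g \<in> carrier G"
    and eq: "foldr (\<otimes>\<^bsub>W\<^esub>) ws \<one>\<^bsub>W\<^esub> = bulb_prod bs \<otimes>\<^bsub>W\<^esub> wr_of_G H G g"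
    and bs: "set bs \<subseteq> {(h, a). h \<in> carrier G \<and> a \<in> carrier H - {\<one>\<^bsub>H\<^esub>} \<and> word_length G S h < length ws}"
    by auto
  have bs_closed: "set bs \<subseteq> carrier G \<times> carrier H" using bs by auto
  have "w \<in> wreath_gens H G S \<union> m_inv W ` wreath_gens H G S" using Cons.prems by simp
  with S show ?case
  proof (cases rule: wreath_letter_cases)
    case (H a)
    have "foldr (\<otimes>\<^bsub>W\<^esub>) (w # ws) \<one>\<^bsub>W\<^esub> = bulb_prod ((\<one>\<^bsub>G\<^esub>, a) # bs) \<otimes>\<^bsub>W\<^esub> wr_of_G H G g"
      using H g bs_closed by (simp add: eq wr_of_H_eq_bulb_one W.m_assoc bulb_closed bulb_prod_closed)
    moreover have "word_length G S \<one>\<^bsub>G\<^esub> = 0"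
      using word_length_le[of "[]" S G] by simp
    ultimately show ?thesis
      using H g bs by (intro exI[of _ "(\<one>\<^bsub>G\<^esub>, a) # bs"] exI[of _ g]) auto
  next
    case (G s)
    have s: "s \<in> carrier G" using G S by auto
    let ?bs = "map (\<lambda>(h, a). (s \<otimes>\<^bsub>G\<^esub> h, a)) bs"
    have "set ?bs \<subseteq> carrier G \<times> carrier H" using s bs_closed by auto
    have "foldr (\<otimes>\<^bsub>W\<^esub>) (w # ws) \<one>\<^bsub>W\<^esub> = (wr_of_G H G s \<otimes>\<^bsub>W\<^esub> bulb_prod bs) \<otimes>\<^bsub>W\<^esub> wr_of_G H G g"
      using G s g bs_closed by (simp add: eq W.m_assoc bulb_prod_closed)
    also have "\<dots> = bulb_prod ?bs \<otimes>\<^bsub>W\<^esub> wr_of_G H G (s \<otimes>\<^bsub>G\<^esub> g)"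
      using s g bs_closed \<open>set ?bs \<subseteq> carrier G \<times> carrier H\<close>
      by (simp add: wr_of_G_mult_bulb_prod W.m_assoc bulb_prod_closed)
    finally have "foldr (\<otimes>\<^bsub>W\<^esub>) (w # ws) \<one>\<^bsub>W\<^esub> = bulb_prod ?bs \<otimes>\<^bsub>W\<^esub> wr_of_G H G (s \<otimes>\<^bsub>G\<^esub> g)" .
    moreover have "word_length G S (s \<otimes>\<^bsub>G\<^esub> h) < length (w # ws)"
      if "h \<in> carrier G" and "word_length G S h < length ws" for h
      using G.word_length_letter_mult_le[OF S _ G(1)] that gen by fastforce
    ultimately show ?thesis
      using s g bs by (intro exI[of _ ?bs] exI[of _ "s \<otimes>\<^bsub>G\<^esub> g"]) auto
  qed
qed

end

theorem lemma3p2: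
  fixes H :: "('h,'c) monoid_scheme" and G :: "('g,'d) monoid_scheme"
    and S :: "'g set" and r :: real and x :: "('g \<Rightarrow> 'h) \<times> 'g"
  assumes "group H" and "finite (carrier H)"
    and "group G" and "finite S" and "S \<subseteq> carrier G" and "generate G S = carrier G"
    and "r > 1"
    and "x \<in> kernel (wreath H G) G snd"
    and "real (word_length (wreath H G) (wreath_gens H G S) x) < r"
  shows "\<exists>bs. set bs \<subseteq> {(g, a). g \<in> carrier G \<and> a \<in> carrier H - {\<one>\<^bsub>H\<^esub>}
                              \<and> real (word_length G S g) < r}
            \<and> foldr (\<lambda>(g, a) y. bulb H G g a \<otimes>\<^bsub>wreath H G\<^esub> y) bs \<one>\<^bsub>wreath H G\<^esub> = x"
proof -
  interpret wreath_product H G by (rule wreath_product.intro) fact+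
  \<comment> \<open>Without some word for x, its word length would be LEAST of an empty set, an unknown value.\<close>
  have "x \<in> generate W (wreath_gens H G S)"
    using kernel_subset_generate assms(5,6,8) by blast
  then obtain ws where len: "length ws = word_length W (wreath_gens H G S) x"
    and ws: "set ws \<subseteq> wreath_gens H G S \<union> m_inv W ` wreath_gens H G S"
    and x: "foldr (\<otimes>\<^bsub>W\<^esub>) ws \<one>\<^bsub>W\<^esub> = x"
    by (metis W.generate_obtain_word wreath_gens_closed[OF assms(5)] word_length_obtain_shortest_word)
  obtain bs g where g: "g \<in> carrier G" and x_eq: "x = bulb_prod bs \<otimes>\<^bsub>W\<^esub> wr_of_G H G g"
    and bs: "set bs \<subseteq> {(h, a). h \<in> carrier G \<and> a \<in> carrier H - {\<one>\<^bsub>H\<^esub>} \<and> word_length G S h < length ws}"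
    using word_eq_bulb_prod_mult[OF assms(5,6) ws] x by blast
  have bs_closed: "set bs \<subseteq> carrier G \<times> carrier H" using bs by auto
  have "g = snd x" using x_eq snd_bulb_prod[OF bs_closed] g by (simp add: snd_wreath_mult wr_of_G_def)
  also have "\<dots> = \<one>\<^bsub>G\<^esub>" using assms(8) by (simp add: kernel_def)
  finally have "x = bulb_prod bs" using x_eq bulb_prod_closed[OF bs_closed] by simp
  then show ?thesis
    using bs len assms(9) by (intro exI[of _ bs]) (fastforce simp: bulb_prod_def)
qed

end
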